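(* Suppose $\sum_{r:\rho_r\le 1/(4k^2)}\rho_r(1-\rho_r)^k\le\frac{1-\tau}{2}$, and let $\Delta\in(0,1)$ and $\rho_{\max}:=\max_r\rho_r$. (i) If $\rho_{\max}\le\frac12$ and $N\ge 132k^2\ln(2R/\Delta)$, then with probability at least $1-\Delta$, $1-\widehat\tau\ge\frac{1-\tau}{4}$. (ii) If $\rho_{\max}>\frac12$ and $N\ge164k^2\ln(4R/\Delta)+\frac{25\ln(2/\Delta)}{1-\rho_{\max}}$, then with probability at least $1-\Delta$, $1-\widehat\tau\ge\frac{1-\tau}{8}$.
   Context: Let $R\ge 2$ be an integer and $\rho=(\rho_1,\dots,\rho_R)$ a probability vector with $\rho_r>0$ for all $r$. Let $Y_1,\dots,Y_N$ be i.i.d. labels with $\mathbb P(Y_j=r)=\rho_r$, $N_r=|\{j:Y_j=r\}|$, $\widehat\rho_r=N_r/N$. Fix an integer $k\ge1$. Set $\tau:=1-\sum_{r}\rho_r(1-\rho_r)^k$ and $\widehat\tau:=1-\sum_r\widehat\rho_r(1-\widehat\rho_r)^k$. *)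

theory Defs
  imports "HOL-Probability.Probability"
begin

text \<open>Labels are 0,...,R-1; the label distribution rho is a pmf p on nat with
  support exactly {..<R}; rho_r = pmf p r.\<close>

definition tau :: "nat pmf \<Rightarrow> nat \<Rightarrow> nat \<Rightarrow> real" where
  "tau p R k = 1 - (\<Sum>r<R. pmf p r * (1 - pmf p r) ^ k)"

definition rho_hat :: "nat \<Rightarrow> (nat \<Rightarrow> nat) \<Rightarrow> nat \<Rightarrow> real" where
  "rho_hat N Y r = real (card {j\<in>{..<N}. Y j = r}) / real N"

definition tau_hat :: "nat \<Rightarrow> (nat \<Rightarrow> nat) \<Rightarrow> nat \<Rightarrow> nat \<Rightarrow> real" where
  "tau_hat N Y R k = 1 - (\<Sum>r<R. rho_hat N Y r * (1 - rho_hat N Y r) ^ k)"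

definition sample :: "nat pmf \<Rightarrow> nat \<Rightarrow> (nat \<Rightarrow> nat) pmf" where
  "sample p N = Pi_pmf {..<N} 0 (\<lambda>_. p)"

end

theory Submission
  imports Defs
begin

(* Write u(x) = x (1 - x)^k, so that 1 - tau = sum_r u(rho_r) and 1 - tau_hat = sum_r u(rho_hat_r),
   where N rho_hat_r is binomial with parameters N and rho_r.

   If 1/(4k^2) < rho <= 1/2, then u(x) >= u(rho)/2 on the window 0.7 rho < x < rho + 1/(16k).
   A multiplicative Chernoff bound for the lower end and Hoeffding's inequality for the upper end
   show that rho_hat_r leaves this window with probability at most 2 exp(-N/(132 k^2)).  By
   hypothesis the labels with rho_r <= 1/(4k^2) carry at most half of 1 - tau, so a union bound
   over the remaining labels gives (i).

   In (ii) let m be the dominant label and eps = 1 - rho_m < 1/2; every other label has mass at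
   most eps.  Either the labels other than m that are not small carry a quarter of 1 - tau, and
   the union bound applies as in (i), or u(rho_m) = (1 - eps) eps^k carries a quarter.  In the
   latter case N (1 - rho_hat_m) is binomial with parameters N and eps, and the same two-sided
   argument on the window (1 - 3/(10k)) eps < x < eps + 1/10 for 1 - rho_hat_m keeps
   u(rho_hat_m) >= u(rho_m)/2.  The Chernoff exponent is now of order N eps / k^2: for k = 1 it
   is paid for by the term 25 ln(2/Delta)/(1 - rho_max) of the sample size, and for k >= 2 the
   dominance of u(rho_m) forces eps > 1/4, because otherwise the other labels alone would carry
   u(eps) >= 3 u(1 - eps). *)


lemma map_pmf_eq_bernoulli_pmf:
  "map_pmf P q = bernoulli_pmf (measure_pmf.prob q {y. P y})"
proof (rule pmf_eqI)
  fix b :: bool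
  have "measure_pmf.prob q {y. \<not> P y} = 1 - measure_pmf.prob q {y. P y}"
    using measure_pmf.prob_neg[of q "\<lambda>y. P y"] by simp
  then show "pmf (map_pmf P q) b = pmf (bernoulli_pmf (measure_pmf.prob q {y. P y})) b"
    by (cases b) (auto simp: pmf_map vimage_def)
qed

lemma Pi_pmf_card_eq_binomial_pmf:
  "map_pmf (\<lambda>Y. card {j\<in>{..<N}. P (Y j)}) (Pi_pmf {..<N} d (\<lambda>_. q))
     = binomial_pmf N (measure_pmf.prob q {y. P y})"
proof -
  have "map_pmf (\<lambda>Y. card {j\<in>{..<N}. P (Y j)}) (Pi_pmf {..<N} d (\<lambda>_. q))
      = map_pmf (\<lambda>f. card {j\<in>{..<N}. f j}) (map_pmf (\<lambda>Y. P \<circ> Y) (Pi_pmf {..<N} d (\<lambda>_. q)))"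
    by (simp add: map_pmf_comp)
  also have "map_pmf (\<lambda>Y. P \<circ> Y) (Pi_pmf {..<N} d (\<lambda>_. q)) = Pi_pmf {..<N} (P d) (\<lambda>_. map_pmf P q)"
    by (rule Pi_pmf_map[symmetric]) auto
  also have "map_pmf (\<lambda>f. card {j\<in>{..<N}. f j}) \<dots> = binomial_pmf N (measure_pmf.prob q {y. P y})"
    unfolding map_pmf_eq_bernoulli_pmf by (rule binomial_pmf_altdef'[symmetric]) auto
  finally show ?thesis .
qed

lemma pmf_add_pmf_le_1:
  assumes "r \<noteq> s"
  shows "pmf p r + pmf p s \<le> 1"
proof -
  have "pmf p r + pmf p s = measure_pmf.prob p {r, s}"
    using assms by (simp add: measure_measure_pmf_finite)
  also have "\<dots> \<le> 1"
    by (rule measure_pmf.prob_le_1)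
  finally show ?thesis .
qed

lemma Max_pmf_attained_lt_1:
  fixes p :: "nat pmf"
  assumes R: "2 \<le> R" and supp: "set_pmf p = {..<R}"
  obtains m where "m < R" "pmf p m = Max (pmf p ` {..<R})" "pmf p m < 1"
proof -
  have "Max (pmf p ` {..<R}) \<in> pmf p ` {..<R}"
    using R by (intro Max_in) (auto simp: lessThan_empty_iff)
  then obtain m where m: "m < R" "pmf p m = Max (pmf p ` {..<R})"
    by (metis imageE lessThan_iff)
  define s :: nat where "s = (if m = 0 then 1 else 0)"
  have s: "s < R" "m \<noteq> s"
    using R by (auto simp: s_def)
  have "0 < pmf p s"
    using s(1) supp by (simp add: pmf_positive_iff)
  then have "pmf p m < 1"
    using pmf_add_pmf_le_1[OF s(2), of p] by simp
  with m that show ?thesis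
    by blast
qed

section \<open>Binomial tail bounds\<close>

lemma binomial_pmf_generating_function:
  fixes \<rho> t :: real
  assumes "0 \<le> \<rho>" "\<rho> \<le> 1"
  shows "(\<Sum>x\<le>n. pmf (binomial_pmf n \<rho>) x * t ^ x) = (\<rho> * t + (1 - \<rho>)) ^ n"
  using assms by (simp add: binomial_ring pmf_binomial power_mult_distrib mult_ac)

lemma binomial_pmf_prob_le_exp_moment:
  fixes \<rho> \<delta> a :: real
  assumes \<rho>: "0 \<le> \<rho>" "\<rho> \<le> 1" and \<delta>: "0 \<le> \<delta>"
  shows "measure_pmf.prob (binomial_pmf n \<rho>) {x. real x \<le> a}
           \<le> exp (\<delta> * a) * (\<rho> * exp (- \<delta>) + (1 - \<rho>)) ^ n"
proof -
  let ?M = "binomial_pmf n \<rho>"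
  let ?A = "{x. real x \<le> a} \<inter> {..n}"
  have "set_pmf ?M \<subseteq> {..n}"
    using \<rho> by (auto simp: set_pmf_binomial_eq)
  then have "measure_pmf.prob ?M {x. real x \<le> a} \<le> measure_pmf.prob ?M ?A"
    by (subst measure_Int_set_pmf[symmetric]) (intro measure_pmf.finite_measure_mono, auto)
  also have "\<dots> = (\<Sum>x\<in>?A. pmf ?M x)"
    by (rule measure_measure_pmf_finite) auto
  also have "\<dots> \<le> (\<Sum>x\<in>?A. pmf ?M x * exp (\<delta> * (a - x)))"
    using \<delta> by (intro sum_mono mult_le_cancel_left1[THEN iffD2]) auto
  also have "\<dots> \<le> (\<Sum>x\<le>n. pmf ?M x * exp (\<delta> * (a - x)))"
    by (intro sum_mono2) auto
  also have "\<dots> = exp (\<delta> * a) * (\<Sum>x\<le>n. pmf ?M x * exp (- \<delta>) ^ x)"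
    by (simp add: sum_distrib_left right_diff_distrib exp_diff exp_minus
        exp_of_nat_mult[symmetric] field_simps)
  also have "\<dots> = exp (\<delta> * a) * (\<rho> * exp (- \<delta>) + (1 - \<rho>)) ^ n"
    by (simp only: binomial_pmf_generating_function[OF \<rho>])
  finally show ?thesis .
qed

lemma exp_minus_le_quadratic:
  fixes x :: real
  assumes "0 \<le> x"
  shows "exp (- x) \<le> 1 - x + x\<^sup>2 / 2"
proof -
  have "1 \<le> (1 + x + x\<^sup>2 / 2) * (1 - x + x\<^sup>2 / 2)"
    using assms by (simp add: algebra_simps power2_eq_square power4_eq_xxxx)
  also have "\<dots> \<le> exp x * (1 - x + x\<^sup>2 / 2)"
  proof (rule mult_right_mono)
    show "1 + x + x\<^sup>2 / 2 \<le> exp x"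
      using exp_lower_Taylor_quadratic assms by simp
    show "0 \<le> 1 - x + x\<^sup>2 / 2"
      using sum_power2_ge_zero[of "1 - x" 1] by (simp add: power2_eq_square algebra_simps)
  qed
  finally have "exp (- x) * 1 \<le> exp (- x) * (exp x * (1 - x + x\<^sup>2 / 2))"
    by (rule mult_left_mono) simp
  then show ?thesis
    by (simp add: mult.assoc[symmetric] exp_add[symmetric])
qed

lemma binomial_pmf_prob_le_chernoff:
  fixes \<rho> \<delta> :: real
  assumes \<rho>: "0 \<le> \<rho>" "\<rho> \<le> 1" and \<delta>: "0 \<le> \<delta>"
  shows "measure_pmf.prob (binomial_pmf n \<rho>) {x. real x \<le> (1 - \<delta>) * n * \<rho>}
           \<le> exp (- (\<delta>\<^sup>2 * n * \<rho> / 2))"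
proof -
  define a where "a = (1 - \<delta>) * n * \<rho>"
  have "measure_pmf.prob (binomial_pmf n \<rho>) {x. real x \<le> a}
      \<le> exp (\<delta> * a) * (\<rho> * exp (- \<delta>) + (1 - \<rho>)) ^ n"
    by (rule binomial_pmf_prob_le_exp_moment[OF \<rho> \<delta>])
  also have "\<dots> = exp (\<delta> * a) * (1 + \<rho> * (exp (- \<delta>) - 1)) ^ n"
    by (simp add: algebra_simps)
  also have "\<dots> \<le> exp (\<delta> * a) * exp (\<rho> * (exp (- \<delta>) - 1)) ^ n"
  proof (intro mult_left_mono power_mono)
    have "0 \<le> (1 - \<rho>) + \<rho> * exp (- \<delta>)"
      using \<rho> by simp
    then show "0 \<le> 1 + \<rho> * (exp (- \<delta>) - 1)"
      by (simp add: algebra_simps)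
  qed (use exp_ge_add_one_self in auto)
  also have "\<dots> = exp (\<delta> * a + n * \<rho> * (exp (- \<delta>) - 1))"
    by (simp add: exp_add exp_of_nat_mult[symmetric] mult.assoc)
  also have "\<dots> \<le> exp (- (\<delta>\<^sup>2 * n * \<rho> / 2))"
  proof -
    have "n * \<rho> * (exp (- \<delta>) - 1) \<le> n * \<rho> * (\<delta>\<^sup>2 / 2 - \<delta>)"
      using \<rho> exp_minus_le_quadratic[OF \<delta>] by (intro mult_left_mono) auto
    then show ?thesis
      unfolding a_def by (simp add: algebra_simps power2_eq_square)
  qed
  finally show ?thesis
    unfolding a_def .
qed

lemma exp_minus_le_of_ln_inverse_le:
  fixes x d :: real
  assumes "0 < d" "ln (1 / d) \<le> x"
  shows "exp (- x) \<le> d"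
proof -
  have "exp (- x) \<le> exp (- ln (1 / d))"
    using assms by simp
  also have "\<dots> = d"
    using assms by (simp add: ln_div)
  finally show ?thesis .
qed

lemma measure_pmf_prob_le_of_subset_Un:
  assumes "A \<subseteq> B \<union> C" "measure_pmf.prob M B \<le> b" "measure_pmf.prob M C \<le> c"
  shows "measure_pmf.prob M A \<le> b + c"
proof -
  have "measure_pmf.prob M A \<le> measure_pmf.prob M (B \<union> C)"
    using assms(1) by (rule measure_pmf.finite_measure_mono) simp
  also have "\<dots> \<le> measure_pmf.prob M B + measure_pmf.prob M C"
    by (rule measure_Un_le) simp_all
  finally show ?thesis
    using assms(2,3) by simp
qed

section \<open>Empirical frequencies\<close>

lemma prob_sample_card:
  "measure_pmf.prob (sample p N) {Y. Q (card {j\<in>{..<N}. P (Y j)})}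
     = measure_pmf.prob (binomial_pmf N (measure_pmf.prob p {y. P y})) {x. Q x}"
proof -
  have "binomial_pmf N (measure_pmf.prob p {y. P y})
          = map_pmf (\<lambda>Y. card {j\<in>{..<N}. P (Y j)}) (sample p N)"
    unfolding sample_def by (rule Pi_pmf_card_eq_binomial_pmf[symmetric])
  then show ?thesis
    by (simp add: vimage_def)
qed

lemma prob_sample_freq_le_chernoff:
  fixes \<delta> :: real
  assumes N: "0 < N" and \<delta>: "0 \<le> \<delta>"
  shows "measure_pmf.prob (sample p N)
           {Y. real (card {j\<in>{..<N}. P (Y j)}) / N \<le> (1 - \<delta>) * measure_pmf.prob p {y. P y}}
         \<le> exp (- (\<delta>\<^sup>2 * N * measure_pmf.prob p {y. P y} / 2))"
proof -
  let ?q = "measure_pmf.prob p {y. P y}"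
  have "measure_pmf.prob (sample p N) {Y. real (card {j\<in>{..<N}. P (Y j)}) / N \<le> (1 - \<delta>) * ?q}
      = measure_pmf.prob (binomial_pmf N ?q) {x. real x \<le> (1 - \<delta>) * N * ?q}"
    using prob_sample_card[of p N "\<lambda>x. real x / N \<le> (1 - \<delta>) * ?q" P] N
    by (simp add: divide_le_eq mult_ac)
  also have "\<dots> \<le> exp (- (\<delta>\<^sup>2 * N * ?q / 2))"
    using \<delta> by (intro binomial_pmf_prob_le_chernoff) auto
  finally show ?thesis .
qed

lemma prob_sample_freq_ge_hoeffding:
  fixes t :: real
  assumes N: "0 < N" and t: "0 \<le> t"
  shows "measure_pmf.prob (sample p N)
           {Y. measure_pmf.prob p {y. P y} + t \<le> real (card {j\<in>{..<N}. P (Y j)}) / N}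
         \<le> exp (- 2 * N * t\<^sup>2)"
proof -
  let ?q = "measure_pmf.prob p {y. P y}"
  have "measure_pmf.prob (sample p N) {Y. ?q + t \<le> real (card {j\<in>{..<N}. P (Y j)}) / N}
      = measure_pmf.prob (binomial_pmf N ?q) {x. ?q + t \<le> real x / N}"
    using prob_sample_card[of p N "\<lambda>x. ?q + t \<le> real x / N" P] by simp
  also have "\<dots> \<le> exp (real_of_int (- 2 * int N) * t\<^sup>2)"
    using N t by (intro binomial_distribution.prob_ge') (auto simp: binomial_distribution_def)
  finally show ?thesis
    by simp
qed

lemma rho_hat_nonneg: "0 \<le> rho_hat N Y r"
  by (simp add: rho_hat_def)

lemma rho_hat_le_1: "rho_hat N Y r \<le> 1"
proof -
  have "card {j\<in>{..<N}. Y j = r} \<le> N"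
    using card_mono[of "{..<N}" "{j\<in>{..<N}. Y j = r}"] by auto
  then show ?thesis
    by (cases "N = 0") (auto simp: rho_hat_def)
qed

lemma one_minus_rho_hat:
  assumes "0 < N"
  shows "1 - rho_hat N Y r = real (card {j\<in>{..<N}. Y j \<noteq> r}) / real N"
proof -
  have "card ({j\<in>{..<N}. Y j = r} \<union> {j\<in>{..<N}. Y j \<noteq> r})
          = card {j\<in>{..<N}. Y j = r} + card {j\<in>{..<N}. Y j \<noteq> r}"
    by (rule card_Un_disjoint) auto
  moreover have "{j\<in>{..<N}. Y j = r} \<union> {j\<in>{..<N}. Y j \<noteq> r} = {..<N}"
    by auto
  ultimately have "real N = real (card {j\<in>{..<N}. Y j = r}) + real (card {j\<in>{..<N}. Y j \<noteq> r})"
    by simp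
  then show ?thesis
    using assms by (simp add: rho_hat_def field_simps)
qed

section \<open>The unmatched mass\<close>

definition unmatched :: "nat \<Rightarrow> real \<Rightarrow> real" where
  "unmatched k x = x * (1 - x) ^ k"

lemma one_minus_tau: "1 - tau p R k = (\<Sum>r<R. unmatched k (pmf p r))"
  by (simp add: tau_def unmatched_def)

lemma one_minus_tau_hat: "1 - tau_hat N Y R k = (\<Sum>r<R. unmatched k (rho_hat N Y r))"
  by (simp add: tau_hat_def unmatched_def)

lemma unmatched_nonneg: "0 \<le> x \<Longrightarrow> x \<le> 1 \<Longrightarrow> 0 \<le> unmatched k x"
  by (simp add: unmatched_def)

lemma Bernoulli_inequality_div:
  fixes c :: real
  assumes "0 < k" "c \<le> k"
  shows "1 - c \<le> (1 - c / k) ^ k"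
  using Bernoulli_inequality[of "- (c / k)" k] assms by (simp add: field_simps)

lemma unmatched_ge_half_of_near:
  fixes x \<rho> :: real
  assumes k: "0 < k" and \<rho>: "0 < \<rho>" "\<rho> \<le> 1/2"
    and x: "7/10 * \<rho> < x" "x < \<rho> + 1 / (16 * k)"
  shows "unmatched k \<rho> / 2 \<le> unmatched k x"
proof -
  have c: "0 \<le> 1 - 1 / (8 * k)" "7/8 \<le> (1 - 1 / (8 * k)) ^ k"
    using k Bernoulli_inequality_div[of k "1/8"] by (simp_all add: field_simps)
  have "(1 - \<rho>) ^ k * (7/8) \<le> (1 - \<rho>) ^ k * (1 - 1 / (8 * k)) ^ k"
    using \<rho> c by (intro mult_left_mono) auto
  also have "\<dots> = ((1 - \<rho>) * (1 - 1 / (8 * k))) ^ k"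
    by (simp add: power_mult_distrib)
  also have "\<dots> \<le> (1 - x) ^ k"
  proof (rule power_mono)
    show "(1 - \<rho>) * (1 - 1 / (8 * k)) \<le> 1 - x"
      using \<rho> x k by (simp add: field_simps)
  qed (use \<rho> c in simp)
  finally have "(7/10 * \<rho>) * ((1 - \<rho>) ^ k * (7/8)) \<le> x * (1 - x) ^ k"
    using \<rho> x by (intro mult_mono) auto
  moreover have "(7/10 * \<rho>) * ((1 - \<rho>) ^ k * (7/8)) = 49/80 * (\<rho> * (1 - \<rho>) ^ k)"
    by simp
  moreover have "0 \<le> \<rho> * (1 - \<rho>) ^ k"
    using \<rho> by simp
  ultimately show ?thesis
    unfolding unmatched_def by linarith
qed

lemma unmatched_compl_ge_half_of_near:
  fixes e \<epsilon> :: real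
  assumes k: "0 < k" and \<epsilon>: "0 < \<epsilon>" "\<epsilon> \<le> 1/2"
    and e: "(1 - 3 / (10 * k)) * \<epsilon> < e" "e < \<epsilon> + 1/10"
  shows "unmatched k (1 - \<epsilon>) / 2 \<le> unmatched k (1 - e)"
proof -
  have c: "0 \<le> 1 - 3 / (10 * k)" "7/10 \<le> (1 - 3 / (10 * k)) ^ k"
    using k Bernoulli_inequality_div[of k "3/10"] by (simp_all add: field_simps)
  have "7/10 * \<epsilon> ^ k \<le> (1 - 3 / (10 * k)) ^ k * \<epsilon> ^ k"
    using \<epsilon> c by (intro mult_right_mono) auto
  also have "\<dots> = ((1 - 3 / (10 * k)) * \<epsilon>) ^ k"
    by (simp add: power_mult_distrib)
  also have "\<dots> \<le> e ^ k"
    using \<epsilon> e c by (intro power_mono) auto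
  finally have "((1 - \<epsilon>) * (4/5)) * (7/10 * \<epsilon> ^ k) \<le> (1 - e) * e ^ k"
    using \<epsilon> e by (intro mult_mono) auto
  moreover have "((1 - \<epsilon>) * (4/5)) * (7/10 * \<epsilon> ^ k) = 14/25 * ((1 - \<epsilon>) * \<epsilon> ^ k)"
    by simp
  moreover have "0 \<le> (1 - \<epsilon>) * \<epsilon> ^ k"
    using \<epsilon> by simp
  moreover have "unmatched k (1 - \<epsilon>) = (1 - \<epsilon>) * \<epsilon> ^ k" "unmatched k (1 - e) = (1 - e) * e ^ k"
    by (simp_all add: unmatched_def)
  ultimately show ?thesis
    by linarith
qed

lemma unmatched_compl_le_of_le_quarter:
  fixes \<epsilon> :: real
  assumes k: "2 \<le> k" and \<epsilon>: "0 \<le> \<epsilon>" "\<epsilon> \<le> 1/4"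
  shows "3 * unmatched k (1 - \<epsilon>) \<le> unmatched k \<epsilon>"
proof -
  obtain j where j: "k = Suc j" "1 \<le> j"
    using k by (cases k) auto
  have "3 * \<epsilon> ^ j \<le> 3 ^ j * \<epsilon> ^ j"
    using power_increasing[of 1 j "3::real"] j \<epsilon> by (intro mult_right_mono) auto
  also have "\<dots> \<le> (1 - \<epsilon>) ^ j"
    unfolding power_mult_distrib[symmetric] using \<epsilon> by (intro power_mono) auto
  finally have "\<epsilon> * (1 - \<epsilon>) * (3 * \<epsilon> ^ j) \<le> \<epsilon> * (1 - \<epsilon>) * (1 - \<epsilon>) ^ j"
    using \<epsilon> by (intro mult_left_mono) auto
  then show ?thesis
    using j by (simp add: unmatched_def mult_ac)
qed

lemma unmatched_compl_le_sum_others: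
  fixes p :: "nat pmf"
  assumes supp: "set_pmf p \<subseteq> {..<R}" and m: "m < R"
  shows "unmatched k (1 - pmf p m) \<le> (\<Sum>r\<in>{..<R} - {m}. unmatched k (pmf p r))"
proof -
  have "(\<Sum>r\<in>{..<R} - {m}. pmf p r) = 1 - pmf p m"
    using sum_pmf_eq_1[OF finite_lessThan supp] sum.remove[OF finite_lessThan, of m R "pmf p"] m
    by simp
  then have "unmatched k (1 - pmf p m) = (\<Sum>r\<in>{..<R} - {m}. pmf p r * (1 - (1 - pmf p m)) ^ k)"
    by (simp add: unmatched_def flip: sum_distrib_right)
  also have "\<dots> \<le> (\<Sum>r\<in>{..<R} - {m}. unmatched k (pmf p r))"
    unfolding unmatched_def
  proof (intro sum_mono mult_left_mono power_mono)
    fix r assume "r \<in> {..<R} - {m}"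
    then show "1 - (1 - pmf p m) \<le> 1 - pmf p r"
      using pmf_add_pmf_le_1[of r m p] by simp
  qed auto
  finally show ?thesis .
qed

section \<open>Concentration of the empirical unmatched mass\<close>

lemma prob_unmatched_rho_hat_lt_half:
  assumes k: "0 < k" and \<rho>: "1 / (4 * real k ^ 2) < pmf p r" "pmf p r \<le> 1/2"
    and L: "0 < L" and N: "132 * real k ^ 2 * L \<le> real N"
  shows "measure_pmf.prob (sample p N)
           {Y. unmatched k (rho_hat N Y r) < unmatched k (pmf p r) / 2} \<le> 2 * exp (- L)"
proof -
  define \<rho> where "\<rho> = pmf p r"
  have "0 < 1 / (4 * real k ^ 2)"
    using k by simp
  then have \<rho>_pos: "0 < \<rho>"
    using \<rho> unfolding \<rho>_def by linarith
  have "132 * real k ^ 2 * L * (1 / (4 * real k ^ 2)) \<le> real N * \<rho>"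
    using N \<rho> L unfolding \<rho>_def by (intro mult_mono) auto
  then have N\<rho>: "33 * L \<le> real N * \<rho>"
    using k by simp
  then have N_pos: "0 < N"
    using L \<rho>_pos by (cases N) auto
  have "measure_pmf.prob (sample p N) {Y. rho_hat N Y r \<le> (1 - 3/10) * \<rho>}
      \<le> exp (- ((3/10)\<^sup>2 * N * \<rho> / 2))"
    using prob_sample_freq_le_chernoff[OF N_pos, of "3/10" p "\<lambda>y. y = r"]
    by (simp add: rho_hat_def \<rho>_def measure_pmf_single)
  also have "\<dots> \<le> exp (- L)"
    using N\<rho> L by (simp add: power2_eq_square)
  finally have low: "measure_pmf.prob (sample p N) {Y. rho_hat N Y r \<le> (1 - 3/10) * \<rho>} \<le> exp (- L)" .
  have "measure_pmf.prob (sample p N) {Y. \<rho> + 1 / (16 * real k) \<le> rho_hat N Y r}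
      \<le> exp (- 2 * N * (1 / (16 * real k))\<^sup>2)"
    using prob_sample_freq_ge_hoeffding[OF N_pos, of "1 / (16 * real k)" p "\<lambda>y. y = r"]
    by (simp add: rho_hat_def \<rho>_def measure_pmf_single)
  also have "\<dots> \<le> exp (- L)"
    using N k L by (simp add: power2_eq_square field_simps)
  finally have high: "measure_pmf.prob (sample p N) {Y. \<rho> + 1 / (16 * real k) \<le> rho_hat N Y r} \<le> exp (- L)" .
  have "{Y. unmatched k (rho_hat N Y r) < unmatched k \<rho> / 2}
      \<subseteq> {Y. rho_hat N Y r \<le> (1 - 3/10) * \<rho>} \<union> {Y. \<rho> + 1 / (16 * real k) \<le> rho_hat N Y r}"
  proof (intro subsetI, rule ccontr)
    fix Y
    assume "Y \<in> {Y. unmatched k (rho_hat N Y r) < unmatched k \<rho> / 2}"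
      and "Y \<notin> {Y. rho_hat N Y r \<le> (1 - 3/10) * \<rho>} \<union> {Y. \<rho> + 1 / (16 * real k) \<le> rho_hat N Y r}"
    then show False
      using unmatched_ge_half_of_near[OF k \<rho>_pos, of "rho_hat N Y r"] \<rho>(2) unfolding \<rho>_def by auto
  qed
  from measure_pmf_prob_le_of_subset_Un[OF this low high] show ?thesis
    unfolding \<rho>_def by simp
qed

lemma prob_tau_hat_ge_of_large_labels:
  assumes k: "0 < k" and S: "S \<subseteq> {..<R}"
    and large: "\<And>r. r \<in> S \<Longrightarrow> 1 / (4 * real k ^ 2) < pmf p r \<and> pmf p r \<le> 1/2"
    and c: "c \<le> (\<Sum>r\<in>S. unmatched k (pmf p r)) / 2"
    and L: "0 < L" and N: "132 * real k ^ 2 * L \<le> real N"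
  shows "1 - 2 * R * exp (- L) \<le> measure_pmf.prob (sample p N) {Y. c \<le> 1 - tau_hat N Y R k}"
proof -
  let ?M = "measure_pmf (sample p N)"
  let ?bad = "\<lambda>r. {Y. unmatched k (rho_hat N Y r) < unmatched k (pmf p r) / 2}"
  have "{Y. \<not> c \<le> 1 - tau_hat N Y R k} \<subseteq> (\<Union>r\<in>S. ?bad r)"
  proof (intro subsetI, rule ccontr)
    fix Y
    assume "Y \<in> {Y. \<not> c \<le> 1 - tau_hat N Y R k}" and "Y \<notin> (\<Union>r\<in>S. ?bad r)"
    then have "(\<Sum>r<R. unmatched k (rho_hat N Y r)) < c"
      and good: "\<forall>r\<in>S. unmatched k (pmf p r) / 2 \<le> unmatched k (rho_hat N Y r)"
      by (auto simp: one_minus_tau_hat not_le)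
    have "c \<le> (\<Sum>r\<in>S. unmatched k (pmf p r) / 2)"
      using c by (simp add: sum_divide_distrib)
    also have "\<dots> \<le> (\<Sum>r\<in>S. unmatched k (rho_hat N Y r))"
      using good by (intro sum_mono) auto
    also have "\<dots> \<le> (\<Sum>r<R. unmatched k (rho_hat N Y r))"
      using S by (intro sum_mono2) (auto intro: unmatched_nonneg rho_hat_nonneg rho_hat_le_1)
    finally show False
      using \<open>(\<Sum>r<R. unmatched k (rho_hat N Y r)) < c\<close> by simp
  qed
  then have "measure ?M {Y. \<not> c \<le> 1 - tau_hat N Y R k} \<le> measure ?M (\<Union>r\<in>S. ?bad r)"
    by (rule measure_pmf.finite_measure_mono) simp
  also have "\<dots> \<le> (\<Sum>r\<in>S. measure ?M (?bad r))"
    using S finite_subset by (intro measure_pmf.finite_measure_subadditive_finite) auto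
  also have "\<dots> \<le> card S * (2 * exp (- L))"
    using large k L N by (intro sum_bounded_above prob_unmatched_rho_hat_lt_half) auto
  also have "\<dots> \<le> R * (2 * exp (- L))"
    using card_mono[OF _ S] by (intro mult_right_mono) auto
  finally show ?thesis
    using measure_pmf.prob_neg[of "sample p N" "\<lambda>Y. c \<le> 1 - tau_hat N Y R k"] by simp
qed

lemma prob_unmatched_rho_hat_dominant:
  assumes k: "0 < k" and \<epsilon>: "0 < 1 - pmf p m" "1 - pmf p m \<le> 1/2"
    and N: "0 < N" and \<Delta>: "0 < \<Delta>"
    and low: "ln (2 / \<Delta>) \<le> (3 / (10 * real k))\<^sup>2 * N * (1 - pmf p m) / 2"
    and high: "ln (2 / \<Delta>) \<le> N / 50"
  shows "1 - \<Delta> \<le> measure_pmf.prob (sample p N)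
                     {Y. unmatched k (pmf p m) / 2 \<le> unmatched k (rho_hat N Y m)}"
proof -
  define \<epsilon> where "\<epsilon> = 1 - pmf p m"
  define \<delta> where "\<delta> = 3 / (10 * real k)"
  define miss where "miss Y = real (card {j\<in>{..<N}. Y j \<noteq> m}) / N" for Y
  have miss_prob: "measure_pmf.prob p {y. y \<noteq> m} = \<epsilon>"
    using measure_pmf.prob_neg[of p "\<lambda>y. y = m"] by (simp add: \<epsilon>_def measure_pmf_single)
  have "measure_pmf.prob (sample p N) {Y. miss Y \<le> (1 - \<delta>) * \<epsilon>} \<le> exp (- (\<delta>\<^sup>2 * N * \<epsilon> / 2))"
    using prob_sample_freq_le_chernoff[OF N, of \<delta> p "\<lambda>y. y \<noteq> m"] k
    by (simp add: miss_def miss_prob \<delta>_def)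
  also have "\<dots> \<le> \<Delta> / 2"
    using low \<Delta> by (intro exp_minus_le_of_ln_inverse_le) (auto simp: \<delta>_def \<epsilon>_def)
  finally have lower: "measure_pmf.prob (sample p N) {Y. miss Y \<le> (1 - \<delta>) * \<epsilon>} \<le> \<Delta> / 2" .
  have "measure_pmf.prob (sample p N) {Y. \<epsilon> + 1/10 \<le> miss Y} \<le> exp (- 2 * N * (1/10)\<^sup>2)"
    using prob_sample_freq_ge_hoeffding[OF N, of "1/10" p "\<lambda>y. y \<noteq> m"]
    by (simp add: miss_def miss_prob)
  also have "\<dots> = exp (- (N / 50))"
    by (simp add: power2_eq_square)
  also have "\<dots> \<le> \<Delta> / 2"
    using high \<Delta> by (intro exp_minus_le_of_ln_inverse_le) auto
  finally have upper: "measure_pmf.prob (sample p N) {Y. \<epsilon> + 1/10 \<le> miss Y} \<le> \<Delta> / 2" .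
  have "{Y. \<not> unmatched k (pmf p m) / 2 \<le> unmatched k (rho_hat N Y m)}
      \<subseteq> {Y. miss Y \<le> (1 - \<delta>) * \<epsilon>} \<union> {Y. \<epsilon> + 1/10 \<le> miss Y}"
  proof (intro subsetI, rule ccontr)
    fix Y
    assume "Y \<in> {Y. \<not> unmatched k (pmf p m) / 2 \<le> unmatched k (rho_hat N Y m)}"
      and "Y \<notin> {Y. miss Y \<le> (1 - \<delta>) * \<epsilon>} \<union> {Y. \<epsilon> + 1/10 \<le> miss Y}"
    moreover have "pmf p m = 1 - \<epsilon>" "rho_hat N Y m = 1 - miss Y"
      using one_minus_rho_hat[OF N, of Y m] by (simp_all add: \<epsilon>_def miss_def)
    ultimately show False
      using unmatched_compl_ge_half_of_near[OF k, of \<epsilon> "miss Y"] \<epsilon> unfolding \<delta>_def \<epsilon>_def by auto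
  qed
  from measure_pmf_prob_le_of_subset_Un[OF this lower upper] show ?thesis
    using measure_pmf.prob_neg[of "sample p N" "\<lambda>Y. unmatched k (pmf p m) / 2 \<le> unmatched k (rho_hat N Y m)"]
    by simp
qed

section \<open>The two regimes\<close>

lemma prob_tau_hat_ge_quarter:
  assumes k: "0 < k" and R: "0 < R" and \<Delta>: "0 < \<Delta>" "\<Delta> < 1"
    and max: "Max (pmf p ` {..<R}) \<le> 1/2"
    and small: "(\<Sum>r\<in>{r\<in>{..<R}. pmf p r \<le> 1 / (4 * real k ^ 2)}. unmatched k (pmf p r))
                  \<le> (1 - tau p R k) / 2"
    and N: "132 * real k ^ 2 * ln (2 * real R / \<Delta>) \<le> real N"
  shows "1 - \<Delta> \<le> measure_pmf.prob (sample p N) {Y. (1 - tau p R k) / 4 \<le> 1 - tau_hat N Y R k}"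
proof -
  define L where "L = ln (2 * real R / \<Delta>)"
  let ?large = "{r\<in>{..<R}. 1 / (4 * real k ^ 2) < pmf p r}"
  have "1 - tau p R k
      = (\<Sum>r\<in>{r\<in>{..<R}. pmf p r \<le> 1 / (4 * real k ^ 2)}. unmatched k (pmf p r))
        + (\<Sum>r\<in>?large. unmatched k (pmf p r))"
    unfolding one_minus_tau
    by (subst sum.Int_Diff[of _ _ "{r. pmf p r \<le> 1 / (4 * real k ^ 2)}"])
       (auto intro!: arg_cong2[where f = "(+)"] sum.cong)
  then have c: "(1 - tau p R k) / 4 \<le> (\<Sum>r\<in>?large. unmatched k (pmf p r)) / 2"
    using small by argo
  have half: "pmf p r \<le> 1/2" if "r < R" for r
  proof -
    have "pmf p r \<le> Max (pmf p ` {..<R})"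
      using that by (intro Max_ge) auto
    then show ?thesis
      using max by linarith
  qed
  have L: "0 < L"
    using R \<Delta> unfolding L_def by (intro ln_gt_zero) (simp add: field_simps)
  have "1 - 2 * real R * exp (- L)
      \<le> measure_pmf.prob (sample p N) {Y. (1 - tau p R k) / 4 \<le> 1 - tau_hat N Y R k}"
    by (rule prob_tau_hat_ge_of_large_labels[OF k _ _ c L]) (use half N in \<open>auto simp: L_def\<close>)
  moreover have "2 * real R * exp (- L) = \<Delta>"
    using R \<Delta> unfolding L_def by (simp add: exp_minus)
  ultimately show ?thesis
    by simp
qed

lemma prob_tau_hat_ge_eighth_of_unmatched_max_le:
  assumes k: "0 < k" and m: "m < R" "1/2 < pmf p m" and \<Delta>: "0 < \<Delta>" "\<Delta> < 1"
    and small: "(\<Sum>r\<in>{r\<in>{..<R}. pmf p r \<le> 1 / (4 * real k ^ 2)}. unmatched k (pmf p r))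
                  \<le> (1 - tau p R k) / 2"
    and minor: "unmatched k (pmf p m) \<le> (1 - tau p R k) / 4"
    and N: "164 * real k ^ 2 * ln (4 * real R / \<Delta>) \<le> real N"
  shows "1 - \<Delta> \<le> measure_pmf.prob (sample p N) {Y. (1 - tau p R k) / 8 \<le> 1 - tau_hat N Y R k}"
proof -
  define L where "L = ln (4 * real R / \<Delta>)"
  let ?small = "{r\<in>{..<R}. pmf p r \<le> 1 / (4 * real k ^ 2)}"
  let ?large = "{r\<in>{..<R}. r \<noteq> m \<and> 1 / (4 * real k ^ 2) < pmf p r}"
  have "1 / (4 * real k ^ 2) \<le> 1/4"
    using k by (simp add: field_simps)
  then have "{..<R} - {m} = ?small \<union> ?large"
    using m by auto
  moreover have "(\<Sum>r<R. unmatched k (pmf p r))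
      = unmatched k (pmf p m) + (\<Sum>r\<in>{..<R} - {m}. unmatched k (pmf p r))"
    using m by (intro sum.remove) auto
  moreover have "(\<Sum>r\<in>?small \<union> ?large. unmatched k (pmf p r))
      = (\<Sum>r\<in>?small. unmatched k (pmf p r)) + (\<Sum>r\<in>?large. unmatched k (pmf p r))"
    by (rule sum.union_disjoint) auto
  ultimately have "1 - tau p R k = unmatched k (pmf p m)
      + (\<Sum>r\<in>?small. unmatched k (pmf p r)) + (\<Sum>r\<in>?large. unmatched k (pmf p r))"
    unfolding one_minus_tau by simp
  then have c: "(1 - tau p R k) / 8 \<le> (\<Sum>r\<in>?large. unmatched k (pmf p r)) / 2"
    using small minor by argo
  have large: "1 / (4 * real k ^ 2) < pmf p r \<and> pmf p r \<le> 1/2" if "r \<in> ?large" for r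
    using that m pmf_add_pmf_le_1[of r m p] by auto
  have L: "0 < L"
    using m \<Delta> unfolding L_def by (intro ln_gt_zero) (simp add: field_simps)
  have "132 * real k ^ 2 * L \<le> 164 * real k ^ 2 * L"
    using L by (intro mult_right_mono) auto
  then have "132 * real k ^ 2 * L \<le> real N"
    using N unfolding L_def by linarith
  then have "1 - 2 * real R * exp (- L)
      \<le> measure_pmf.prob (sample p N) {Y. (1 - tau p R k) / 8 \<le> 1 - tau_hat N Y R k}"
    by (intro prob_tau_hat_ge_of_large_labels[OF k _ large c L]) auto
  moreover have "2 * real R * exp (- L) = \<Delta> / 2"
    using m \<Delta> unfolding L_def by (simp add: exp_minus)
  ultimately show ?thesis
    using \<Delta> by simp
qed

lemma quarter_lt_one_minus_pmf_of_unmatched_gt: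
  fixes p :: "nat pmf"
  assumes k: "2 \<le> k" and supp: "set_pmf p \<subseteq> {..<R}" and m: "m < R"
    and dominant: "(1 - tau p R k) / 4 < unmatched k (pmf p m)"
  shows "1/4 < 1 - pmf p m"
proof (rule ccontr)
  assume "\<not> 1/4 < 1 - pmf p m"
  then have "3 * unmatched k (1 - (1 - pmf p m)) \<le> unmatched k (1 - pmf p m)"
    using k by (intro unmatched_compl_le_of_le_quarter) (auto simp: pmf_le_1)
  also have "\<dots> \<le> (\<Sum>r\<in>{..<R} - {m}. unmatched k (pmf p r))"
    by (rule unmatched_compl_le_sum_others[OF supp m])
  also have "\<dots> = (1 - tau p R k) - unmatched k (pmf p m)"
    unfolding one_minus_tau using m by (simp add: sum_diff1)
  finally show False
    using dominant by simp
qed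

lemma dominant_chernoff_exponent_ge:
  fixes \<epsilon> l L :: real and N :: nat
  assumes k: "0 < k" and \<epsilon>: "0 < \<epsilon>" and l: "0 \<le> l" "l \<le> L"
    and N: "164 * real k ^ 2 * L + 25 * l / \<epsilon> \<le> real N"
    and quarter: "2 \<le> k \<Longrightarrow> 1/4 < \<epsilon>"
  shows "l \<le> (3 / (10 * real k))\<^sup>2 * real N * \<epsilon> / 2"
proof -
  have L_nonneg: "0 \<le> 164 * real k ^ 2 * L" and l_div_nonneg: "0 \<le> 25 * l / \<epsilon>"
    using l \<epsilon> by simp_all
  have "200 * (real k ^ 2 * l) \<le> 9 * (real N * \<epsilon>)"
  proof (cases "k = 1")
    case True
    have "25 * l / \<epsilon> \<le> real N"
      using N L_nonneg by linarith
    then have "25 * l \<le> real N * \<epsilon>"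
      using \<epsilon> by (simp add: divide_le_eq)
    then show ?thesis
      using True \<epsilon> l by simp
  next
    case False
    then have "1/4 < \<epsilon>"
      using k quarter by simp
    moreover have "164 * real k ^ 2 * L \<le> real N"
      using N l_div_nonneg by linarith
    ultimately have "164 * real k ^ 2 * L * (1/4) \<le> real N * \<epsilon>"
      using l by (intro mult_mono) auto
    moreover have "164 * real k ^ 2 * L * (1/4) = 41 * (real k ^ 2 * L)"
      by simp
    moreover have "0 \<le> real k ^ 2 * l" "real k ^ 2 * l \<le> real k ^ 2 * L"
      using l by (auto intro: mult_left_mono)
    ultimately show ?thesis
      by linarith
  qed
  moreover have "(3 / (10 * real k))\<^sup>2 * real N * \<epsilon> / 2 = 9 * (real N * \<epsilon>) / (200 * real k ^ 2)"
    using k by (simp add: power2_eq_square field_simps)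
  ultimately show ?thesis
    using k by (simp add: le_divide_eq mult_ac)
qed

lemma prob_tau_hat_ge_eighth_of_unmatched_max_gt:
  fixes p :: "nat pmf"
  assumes k: "0 < k" and supp: "set_pmf p \<subseteq> {..<R}"
    and m: "m < R" "1/2 < pmf p m" "pmf p m < 1" and \<Delta>: "0 < \<Delta>" "\<Delta> < 1"
    and dominant: "(1 - tau p R k) / 4 < unmatched k (pmf p m)"
    and N: "164 * real k ^ 2 * ln (4 * real R / \<Delta>) + 25 * ln (2 / \<Delta>) / (1 - pmf p m) \<le> real N"
  shows "1 - \<Delta> \<le> measure_pmf.prob (sample p N) {Y. (1 - tau p R k) / 8 \<le> 1 - tau_hat N Y R k}"
proof -
  define L where "L = ln (4 * real R / \<Delta>)"
  have l: "0 < ln (2 / \<Delta>)" "ln (2 / \<Delta>) \<le> L"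
    using \<Delta> m unfolding L_def by (auto intro!: ln_gt_zero simp: field_simps)
  have "0 \<le> 25 * ln (2 / \<Delta>) / (1 - pmf p m)"
    using l m by simp
  moreover have "L \<le> real k ^ 2 * L"
    using k l by (simp add: one_le_power)
  ultimately have high: "ln (2 / \<Delta>) \<le> real N / 50"
    using N l unfolding L_def[symmetric] by linarith
  have low: "ln (2 / \<Delta>) \<le> (3 / (10 * real k))\<^sup>2 * real N * (1 - pmf p m) / 2"
    using quarter_lt_one_minus_pmf_of_unmatched_gt[OF _ supp m(1) dominant] m(3) l N
    by (intro dominant_chernoff_exponent_ge[OF k, of _ _ L]) (auto simp: L_def)
  have N_pos: "0 < N"
    using high l by (cases N) auto
  have "1 - \<Delta> \<le> measure_pmf.prob (sample p N)
                     {Y. unmatched k (pmf p m) / 2 \<le> unmatched k (rho_hat N Y m)}"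
    using m by (intro prob_unmatched_rho_hat_dominant[OF k _ _ N_pos \<Delta>(1) low high]) auto
  also have "\<dots> \<le> measure_pmf.prob (sample p N) {Y. (1 - tau p R k) / 8 \<le> 1 - tau_hat N Y R k}"
  proof (rule measure_pmf.finite_measure_mono)
    have le_tau_hat: "unmatched k (rho_hat N Y m) \<le> 1 - tau_hat N Y R k" for Y
      unfolding one_minus_tau_hat using m
      by (intro member_le_sum) (auto intro: unmatched_nonneg rho_hat_nonneg rho_hat_le_1)
    show "{Y. unmatched k (pmf p m) / 2 \<le> unmatched k (rho_hat N Y m)}
        \<subseteq> {Y. (1 - tau p R k) / 8 \<le> 1 - tau_hat N Y R k}"
    proof (intro subsetI)
      fix Y
      assume "Y \<in> {Y. unmatched k (pmf p m) / 2 \<le> unmatched k (rho_hat N Y m)}"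
      then show "Y \<in> {Y. (1 - tau p R k) / 8 \<le> 1 - tau_hat N Y R k}"
        using dominant le_tau_hat[of Y] by simp
    qed
  qed simp
  finally show ?thesis .
qed

lemma prob_tau_hat_ge_eighth:
  fixes p :: "nat pmf"
  assumes k: "0 < k" and supp: "set_pmf p \<subseteq> {..<R}"
    and m: "m < R" "1/2 < pmf p m" "pmf p m < 1" and \<Delta>: "0 < \<Delta>" "\<Delta> < 1"
    and small: "(\<Sum>r\<in>{r\<in>{..<R}. pmf p r \<le> 1 / (4 * real k ^ 2)}. unmatched k (pmf p r))
                  \<le> (1 - tau p R k) / 2"
    and N: "164 * real k ^ 2 * ln (4 * real R / \<Delta>) + 25 * ln (2 / \<Delta>) / (1 - pmf p m) \<le> real N"
  shows "1 - \<Delta> \<le> measure_pmf.prob (sample p N) {Y. (1 - tau p R k) / 8 \<le> 1 - tau_hat N Y R k}"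
proof (cases "unmatched k (pmf p m) \<le> (1 - tau p R k) / 4")
  case True
  have "0 \<le> 25 * ln (2 / \<Delta>) / (1 - pmf p m)"
    using \<Delta> m by (intro divide_nonneg_pos) (auto intro: ln_ge_zero)
  then show ?thesis
    using N by (intro prob_tau_hat_ge_eighth_of_unmatched_max_le[OF k m(1,2) \<Delta> small True]) auto
next
  case False
  then show ?thesis
    using N by (intro prob_tau_hat_ge_eighth_of_unmatched_max_gt[OF k supp m \<Delta>]) auto
qed

theorem mainTheorem3:
  fixes p :: "nat pmf" and R k N :: nat and \<Delta> :: real
  assumes R: "R \<ge> 2"
    and supp: "set_pmf p = {..<R}"
    and k: "k \<ge> 1"
    and small: "(\<Sum>r\<in>{r\<in>{..<R}. pmf p r \<le> 1 / (4 * real k ^ 2)}. pmf p r * (1 - pmf p r) ^ k)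
                  \<le> (1 - tau p R k) / 2"
    and \<Delta>: "0 < \<Delta>" "\<Delta> < 1"
  shows "(Max (pmf p ` {..<R}) \<le> 1/2 \<longrightarrow>
            real N \<ge> 132 * real k ^ 2 * ln (2 * real R / \<Delta>) \<longrightarrow>
            measure_pmf.prob (sample p N) {Y. 1 - tau_hat N Y R k \<ge> (1 - tau p R k) / 4} \<ge> 1 - \<Delta>)
       \<and> (Max (pmf p ` {..<R}) > 1/2 \<longrightarrow>
            real N \<ge> 164 * real k ^ 2 * ln (4 * real R / \<Delta>)
                     + 25 * ln (2 / \<Delta>) / (1 - Max (pmf p ` {..<R})) \<longrightarrow>
            measure_pmf.prob (sample p N) {Y. 1 - tau_hat N Y R k \<ge> (1 - tau p R k) / 8} \<ge> 1 - \<Delta>)"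
proof -
  have k': "0 < k"
    using k by simp
  have small': "(\<Sum>r\<in>{r\<in>{..<R}. pmf p r \<le> 1 / (4 * real k ^ 2)}. unmatched k (pmf p r))
                  \<le> (1 - tau p R k) / 2"
    using small by (simp add: unmatched_def)
  obtain m where m: "m < R" "pmf p m = Max (pmf p ` {..<R})" "pmf p m < 1"
    using Max_pmf_attained_lt_1[OF R supp] .
  show ?thesis
  proof (intro conjI impI)
    assume "Max (pmf p ` {..<R}) \<le> 1/2"
      and "real N \<ge> 132 * real k ^ 2 * ln (2 * real R / \<Delta>)"
    then show "measure_pmf.prob (sample p N) {Y. 1 - tau_hat N Y R k \<ge> (1 - tau p R k) / 4} \<ge> 1 - \<Delta>"
      using R by (intro prob_tau_hat_ge_quarter[OF k' _ \<Delta> _ small']) auto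
  next
    assume "Max (pmf p ` {..<R}) > 1/2" and
      "real N \<ge> 164 * real k ^ 2 * ln (4 * real R / \<Delta>) + 25 * ln (2 / \<Delta>) / (1 - Max (pmf p ` {..<R}))"
    then show "measure_pmf.prob (sample p N) {Y. 1 - tau_hat N Y R k \<ge> (1 - tau p R k) / 8} \<ge> 1 - \<Delta>"
      using supp m by (intro prob_tau_hat_ge_eighth[OF k' _ m(1) _ m(3) \<Delta> small']) auto
  qed
qed

end
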